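(* Let $p>1$, $s\ge r\ge2$, let $Q$ be an $s$-vertex $r$-graph and let $\mathcal P$ be a hereditary property of $r$-graphs with $\lambda^{(p)}(Q,\mathcal P)>0$. For each $n\ge s$ let $H_n\in\mathcal P_n$ satisfy $\lambda^{(p)}(Q,H_n)=\lambda^{(p)}(Q,\mathcal P_n)$ and let $\mathbf x^{(n)}$ be a principal $Q$-eigenvector of $H_n$ (for $p$). Then there exist infinitely many $n$ such that $$\big(\mathbf x^{(n)}_{\min}\big)^{p}\ge\frac1n\Big(1-\frac{p}{(p-1)s\log n}\Big).$$
   Context: An $r$-graph ($r\ge 2$) is a finite hypergraph all of whose edges have exactly $r$ vertices. For $I\subseteq V(H)$, $H[I]$ denotes the induced subhypergraph on $I$. For an $s$-vertex $r$-graph $Q$ and an $r$-graph $H$, $\mathcal N(Q,H)$ is the number of (not necessarily induced) subgraphs of $H$ isomorphic to $Q$. For an $n$-vertex $r$-graph $H$ with vertex set $[n]$ and $\mathbf x\in\mathbb R^n$, $P_{Q,H}(\mathbf x)=s!\sum_{\{i_1,\dots,i_s\}\in\binom{[n]}{s}}\mathcal N(Q,H[\{i_1,\dots,i_s\}])\,x_{i_1}\cdots x_{i_s}$, and for $p\ge1$, $\lambda^{(p)}(Q,H)=\max_{\|\mathbf x\|_p=1}P_{Q,H}(\mathbf x)$. A principal $Q$-eigenvector of $H$ is a nonnegative vector $\mathbf x$ with $\|\mathbf x\|_p=1$ and $P_{Q,H}(\mathbf x)=\lambda^{(p)}(Q,H)$; $\mathbf x_{\min}$ denotes its smallest entry.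 A hereditary property $\mathcal P$ of $r$-graphs is a family of $r$-graphs closed under isomorphism and under taking induced subgraphs; as a standing assumption, whenever $H\in\mathcal P$, the disjoint union of $H$ with an isolated vertex is also in $\mathcal P$. $\mathcal P_n$ is the set of members of $\mathcal P$ with $n$ vertices; $\lambda^{(p)}(Q,\mathcal P_n)=\max\{\lambda^{(p)}(Q,H):H\in\mathcal P_n\}$ and $\lambda^{(p)}(Q,\mathcal P)=\lim_{n\to\infty}\lambda^{(p)}(Q,\mathcal P_n)n^{s/p-s}$ (this limit exists). $\log$ is the natural logarithm. *)

theory Defs
  imports "HOL-Analysis.Analysis"
begin

type_synonym hgraph = "nat set \<times> nat set set"

definition verts :: "hgraph \<Rightarrow> nat set" where "verts H = fst H"
definition edges :: "hgraph \<Rightarrow> nat set set" where "edges H = snd H"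

definition rgraph :: "nat \<Rightarrow> hgraph \<Rightarrow> bool" where
  "rgraph r H \<longleftrightarrow> finite (verts H) \<and> (\<forall>e\<in>edges H. e \<subseteq> verts H \<and> card e = r)"

definition hiso :: "hgraph \<Rightarrow> hgraph \<Rightarrow> bool" where
  "hiso H H' \<longleftrightarrow> (\<exists>f. bij_betw f (verts H) (verts H') \<and> edges H' = (\<lambda>e. f ` e) ` edges H)"

definition induced :: "hgraph \<Rightarrow> nat set \<Rightarrow> hgraph" where
  "induced H I = (I, {e \<in> edges H. e \<subseteq> I})"

definition hereditary :: "nat \<Rightarrow> hgraph set \<Rightarrow> bool" where
  "hereditary r \<P> \<longleftrightarrow>
     (\<forall>H\<in>\<P>. rgraph r H)
   \<and> (\<forall>H\<in>\<P>. \<forall>H'. hiso H H' \<longrightarrow> H' \<in> \<P>)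
   \<and> (\<forall>H\<in>\<P>. \<forall>I. I \<subseteq> verts H \<longrightarrow> induced H I \<in> \<P>)
   \<and> (\<forall>H\<in>\<P>. \<forall>v. v \<notin> verts H \<longrightarrow> (insert v (verts H), edges H) \<in> \<P>)"

definition Ncopies :: "hgraph \<Rightarrow> hgraph \<Rightarrow> nat" where
  "Ncopies Q H = card {(W, F). W \<subseteq> verts H \<and> F \<subseteq> edges H \<and> (\<forall>e\<in>F. e \<subseteq> W) \<and> hiso (W, F) Q}"

definition PQ :: "hgraph \<Rightarrow> hgraph \<Rightarrow> (nat \<Rightarrow> real) \<Rightarrow> real" where
  "PQ Q H x = fact (card (verts Q)) *
     (\<Sum>I\<in>{I. I \<subseteq> verts H \<and> card I = card (verts Q)}.
        real (Ncopies Q (induced H I)) * (\<Prod>i\<in>I. x i))"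

definition pnorm_one :: "real \<Rightarrow> nat set \<Rightarrow> (nat \<Rightarrow> real) \<Rightarrow> bool" where
  "pnorm_one p V x \<longleftrightarrow> (\<Sum>i\<in>V. \<bar>x i\<bar> powr p) = 1"

definition lam :: "real \<Rightarrow> hgraph \<Rightarrow> hgraph \<Rightarrow> real" where
  "lam p Q H = Sup {PQ Q H x | x. pnorm_one p (verts H) x}"

definition principal_eigvec :: "real \<Rightarrow> hgraph \<Rightarrow> hgraph \<Rightarrow> (nat \<Rightarrow> real) \<Rightarrow> bool" where
  "principal_eigvec p Q H x \<longleftrightarrow> (\<forall>i\<in>verts H. x i \<ge> 0) \<and> pnorm_one p (verts H) x
     \<and> PQ Q H x = lam p Q H"

definition xmin :: "nat set \<Rightarrow> (nat \<Rightarrow> real) \<Rightarrow> real" where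
  "xmin V x = Min (x ` V)"

definition lamPn :: "real \<Rightarrow> hgraph \<Rightarrow> hgraph set \<Rightarrow> nat \<Rightarrow> real" where
  "lamPn p Q \<P> n = Sup {lam p Q H | H. H \<in> \<P> \<and> card (verts H) = n}"

definition lamP :: "real \<Rightarrow> hgraph \<Rightarrow> hgraph set \<Rightarrow> real" where
  "lamP p Q \<P> = lim (\<lambda>n. lamPn p Q \<P> n * real n powr (real (card (verts Q)) / p - real (card (verts Q))))"

end

(*
  Write lambda_n = lambda(Q, P_n), let x be a principal eigenvector of an extremal H_n, and let
  t = x_v^p for a vertex v where x is minimal. Moving x_v alone cannot increase P_{Q,H}
  relative to the s/p-th power of the p-norm, which yields the Lagrange identity
  x_v dP/dx_v = s lambda_n t. Deleting v and rescaling the remaining entries to unit norm thus gives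
  lambda_{n-1} >= lambda_n (1 - s t) (1 - t)^(-s/p).
  If t stayed below (1/n)(1 - p/((p-1) s log n)) for all large n, this factor would beat the
  ratio of the weights n^(s/p-s) sqrt(log n) at n and n-1, so lambda_n n^(s/p-s) sqrt(log n)
  would be eventually nonincreasing; as sqrt(log n) diverges, lambda_n n^(s/p-s) would tend
  to 0, contradicting lambda(Q, P) > 0.
*)
theory Submission
  imports Defs "HOL-Real_Asymp.Real_Asymp"
begin

section \<open>The polynomial $P_{Q,H}$ and its maximum on the unit sphere\<close>

lemma verts_pair [simp]: "verts (V, E) = V"
  by (simp add: verts_def)

lemma verts_induced [simp]: "verts (induced H I) = I"
  by (simp add: induced_def verts_def)

lemma induced_induced: "I \<subseteq> J \<Longrightarrow> induced (induced H J) I = induced H I"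
  by (auto simp: induced_def edges_def verts_def)

text \<open>The partial derivative $\partial P_{Q,H}/\partial x_v$; as $P_{Q,H}$ is multilinear it does not
  depend on $x_v$.\<close>
definition PQ_partial :: "hgraph \<Rightarrow> hgraph \<Rightarrow> nat \<Rightarrow> (nat \<Rightarrow> real) \<Rightarrow> real" where
  "PQ_partial Q H v x = fact (card (verts Q)) *
     (\<Sum>I\<in>{I. I \<subseteq> verts H \<and> card I = card (verts Q) \<and> v \<in> I}.
        real (Ncopies Q (induced H I)) * (\<Prod>i\<in>I - {v}. x i))"

lemma PQ_fun_upd:
  assumes "finite (verts H)" "v \<in> verts H"
  shows "PQ Q H (x(v := w)) = PQ Q (induced H (verts H - {v})) x + w * PQ_partial Q H v x"
proof -
  let ?k = "card (verts Q)"
  let ?c = "\<lambda>I. real (Ncopies Q (induced H I))"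
  let ?f = "\<lambda>I. ?c I * (\<Prod>i\<in>I. (x(v := w)) i)"
  let ?without = "{I. I \<subseteq> verts H - {v} \<and> card I = ?k}"
  let ?with = "{I. I \<subseteq> verts H \<and> card I = ?k \<and> v \<in> I}"
  have fin: "finite ?without" "finite ?with"
    using assms(1) by (auto intro: finite_subset[OF _ finite_Collect_subsets])
  have "{I. I \<subseteq> verts H \<and> card I = ?k} = ?without \<union> ?with"
    by auto
  then have "sum ?f {I. I \<subseteq> verts H \<and> card I = ?k} = sum ?f ?without + sum ?f ?with"
    using fin by (simp only:) (rule sum.union_disjoint; auto)
  moreover have "sum ?f ?without =
      (\<Sum>I\<in>{I. I \<subseteq> verts (induced H (verts H - {v})) \<and> card I = ?k}.
         real (Ncopies Q (induced (induced H (verts H - {v})) I)) * (\<Prod>i\<in>I. x i))"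
    by (intro sum.cong refl arg_cong2[where f = "(*)"] prod.cong) (auto simp: induced_induced)
  moreover have "?f I = w * (?c I * (\<Prod>i\<in>I - {v}. x i))" if "I \<in> ?with" for I
  proof -
    have "finite I"
      using that assms(1) finite_subset by blast
    then have "(\<Prod>i\<in>I. (x(v := w)) i) = w * (\<Prod>i\<in>I - {v}. (x(v := w)) i)"
      using that prod.remove[of I v "x(v := w)"] by simp
    also have "(\<Prod>i\<in>I - {v}. (x(v := w)) i) = (\<Prod>i\<in>I - {v}. x i)"
      by (rule prod.cong) auto
    finally show ?thesis
      by simp
  qed
  then have "sum ?f ?with = w * (\<Sum>I\<in>?with. ?c I * (\<Prod>i\<in>I - {v}. x i))"
    unfolding sum_distrib_left by (intro sum.cong) auto
  ultimately show ?thesis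
    unfolding PQ_def PQ_partial_def by (simp add: algebra_simps)
qed

lemma PQ_split:
  assumes "finite (verts H)" "v \<in> verts H"
  shows "PQ Q H x = PQ Q (induced H (verts H - {v})) x + x v * PQ_partial Q H v x"
  using PQ_fun_upd[OF assms, of Q x "x v"] by simp

lemma PQ_scale: "PQ Q H (\<lambda>i. c * x i) = c ^ card (verts Q) * PQ Q H x"
proof -
  have "real (Ncopies Q (induced H I)) * (\<Prod>i\<in>I. c * x i)
      = c ^ card (verts Q) * (real (Ncopies Q (induced H I)) * (\<Prod>i\<in>I. x i))"
    if "card I = card (verts Q)" for I
    using that by (simp add: prod.distrib)
  then have "(\<Sum>I\<in>{I. I \<subseteq> verts H \<and> card I = card (verts Q)}.
        real (Ncopies Q (induced H I)) * (\<Prod>i\<in>I. c * x i))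
    = c ^ card (verts Q) * (\<Sum>I\<in>{I. I \<subseteq> verts H \<and> card I = card (verts Q)}.
        real (Ncopies Q (induced H I)) * (\<Prod>i\<in>I. x i))"
    unfolding sum_distrib_left by (intro sum.cong) auto
  then show ?thesis
    unfolding PQ_def by simp
qed

lemma PQ_nonneg: "(\<And>i. i \<in> verts H \<Longrightarrow> 0 \<le> x i) \<Longrightarrow> 0 \<le> PQ Q H x"
  unfolding PQ_def by (intro mult_nonneg_nonneg sum_nonneg prod_nonneg) auto

lemma pnorm_one_abs_le_1:
  assumes "p > 0" "finite V" "pnorm_one p V y" "i \<in> V"
  shows "\<bar>y i\<bar> \<le> 1"
proof -
  have "\<bar>y i\<bar> powr p \<le> (\<Sum>j\<in>V. \<bar>y j\<bar> powr p)"
    using assms(2,4) by (intro member_le_sum) auto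
  then have "\<bar>y i\<bar> powr p \<le> 1 powr p"
    using assms(3) unfolding pnorm_one_def by simp
  then show ?thesis
    using assms(1) powr_less_mono2[of p 1 "\<bar>y i\<bar>"] by fastforce
qed

lemma Ncopies_induced_le:
  assumes "finite I"
  shows "Ncopies Q (induced H I) \<le> 2 ^ card I * 2 ^ 2 ^ card I"
proof -
  have "Ncopies Q (induced H I) \<le> card (Pow I \<times> Pow (Pow I))"
    unfolding Ncopies_def using assms
    by (intro card_mono) (auto simp: induced_def edges_def)
  then show ?thesis
    using assms by (simp add: card_cartesian_product card_Pow)
qed

lemma PQ_le_on_sphere:
  assumes "p > 0" "finite (verts H)" "pnorm_one p (verts H) y"
  shows "PQ Q H y \<le> fact (card (verts Q)) * 2 ^ card (verts H) * 2 ^ card (verts Q) * 2 ^ 2 ^ card (verts Q)"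
proof -
  let ?k = "card (verts Q)"
  let ?J = "{I. I \<subseteq> verts H \<and> card I = ?k}"
  have term_le: "real (Ncopies Q (induced H I)) * (\<Prod>i\<in>I. y i) \<le> 2 ^ ?k * 2 ^ 2 ^ ?k"
    if "I \<in> ?J" for I
  proof -
    have "finite I"
      using that assms(2) finite_subset by auto
    then have "real (Ncopies Q (induced H I)) \<le> real (2 ^ ?k * 2 ^ 2 ^ ?k)"
      using that Ncopies_induced_le[of I Q H] by (intro of_nat_mono) auto
    then have "real (Ncopies Q (induced H I)) \<le> 2 ^ ?k * 2 ^ 2 ^ ?k"
      by simp
    moreover have "\<bar>\<Prod>i\<in>I. y i\<bar> \<le> 1"
      unfolding abs_prod using that pnorm_one_abs_le_1[OF assms] by (intro prod_le_1) auto
    ultimately show ?thesis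
      by (smt (verit) abs_ge_self mult_left_le mult_mono of_nat_0_le_iff)
  qed
  have "card ?J \<le> card (Pow (verts H))"
    using assms(2) by (intro card_mono) auto
  then have "real (card ?J) \<le> 2 ^ card (verts H)"
    using assms(2) by (simp add: card_Pow flip: of_nat_le_iff)
  have "(\<Sum>I\<in>?J. real (Ncopies Q (induced H I)) * (\<Prod>i\<in>I. y i))
      \<le> real (card ?J) * (2 ^ ?k * 2 ^ 2 ^ ?k)"
    using term_le by (intro sum_bounded_above) auto
  also have "\<dots> \<le> 2 ^ card (verts H) * (2 ^ ?k * 2 ^ 2 ^ ?k)"
    using \<open>real (card ?J) \<le> 2 ^ card (verts H)\<close> by (intro mult_right_mono) auto
  finally have "(\<Sum>I\<in>?J. real (Ncopies Q (induced H I)) * (\<Prod>i\<in>I. y i))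
      \<le> 2 ^ card (verts H) * (2 ^ ?k * 2 ^ 2 ^ ?k)" .
  then show ?thesis
    unfolding PQ_def by (simp add: mult.assoc mult_left_mono)
qed

lemma bdd_above_PQ_sphere:
  assumes "p > 0" "finite (verts H)"
  shows "bdd_above {PQ Q H x | x. pnorm_one p (verts H) x}"
  using PQ_le_on_sphere[OF assms] by (intro bdd_aboveI) blast

lemma PQ_le_lam:
  assumes "p > 0" "finite (verts H)" "pnorm_one p (verts H) y"
  shows "PQ Q H y \<le> lam p Q H"
  unfolding lam_def using assms bdd_above_PQ_sphere by (intro cSup_upper) auto

lemma pnorm_one_indicator:
  assumes "finite V" "v \<in> V"
  shows "pnorm_one p V (\<lambda>i. if i = v then 1 else 0)"
proof -
  have "(\<Sum>i\<in>V. \<bar>if i = v then 1 else 0 :: real\<bar> powr p) = (\<Sum>i\<in>V. if i = v then 1 else 0)"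
    by (intro sum.cong) auto
  then show ?thesis
    using assms unfolding pnorm_one_def by simp
qed

lemma lam_le:
  assumes "p > 0" "finite (verts H)" "verts H \<noteq> {}"
  shows "lam p Q H \<le> fact (card (verts Q)) * 2 ^ card (verts H) * 2 ^ card (verts Q) * 2 ^ 2 ^ card (verts Q)"
  unfolding lam_def
proof (rule cSup_least)
  obtain v where "v \<in> verts H"
    using assms(3) by auto
  then show "{PQ Q H x |x. pnorm_one p (verts H) x} \<noteq> {}"
    using pnorm_one_indicator assms(2) by blast
qed (use PQ_le_on_sphere[OF assms(1,2)] in blast)

lemma lam_le_lamPn:
  assumes "p > 0" "H \<in> \<P>" "card (verts H) = n" "n \<ge> 1"
  shows "lam p Q H \<le> lamPn p Q \<P> n"
  unfolding lamPn_def
proof (rule cSup_upper)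
  show "bdd_above {lam p Q H |H. H \<in> \<P> \<and> card (verts H) = n}"
  proof (rule bdd_aboveI)
    fix z assume "z \<in> {lam p Q H |H. H \<in> \<P> \<and> card (verts H) = n}"
    then obtain H' where "z = lam p Q H'" "card (verts H') = n"
      by auto
    moreover have "finite (verts H')" "verts H' \<noteq> {}"
      using \<open>card (verts H') = n\<close> assms(4) card_ge_0_finite by force+
    ultimately show "z \<le> fact (card (verts Q)) * 2 ^ n * 2 ^ card (verts Q) * 2 ^ 2 ^ card (verts Q)"
      using lam_le[OF assms(1)] by blast
  qed
qed (use assms(2,3) in blast)

lemma PQ_le_lam_mult_powr:
  assumes "p > 0" "finite (verts H)" and S: "S = (\<Sum>i\<in>verts H. \<bar>z i\<bar> powr p)" "S > 0"
  shows "PQ Q H z \<le> lam p Q H * S powr (card (verts Q) / p)"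
proof -
  let ?k = "card (verts Q)"
  define c where "c = S powr (-1 / p)"
  have "c > 0"
    unfolding c_def using S by simp
  have "c powr p = 1 / S"
    unfolding c_def powr_powr using assms(1) S by (simp add: powr_minus_divide)
  moreover have "(\<Sum>i\<in>verts H. \<bar>c * z i\<bar> powr p) = c powr p * S"
    unfolding S(1) sum_distrib_left using \<open>c > 0\<close> by (simp add: abs_mult powr_mult)
  ultimately have "pnorm_one p (verts H) (\<lambda>i. c * z i)"
    unfolding pnorm_one_def using \<open>S > 0\<close> by simp
  then have "c ^ ?k * PQ Q H z \<le> lam p Q H"
    using PQ_le_lam[OF assms(1,2)] PQ_scale by metis
  moreover have "S powr (?k / p) * c ^ ?k = 1"
    unfolding c_def using S
    by (simp add: powr_realpow[symmetric] powr_powr powr_add[symmetric])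
  ultimately have "PQ Q H z = S powr (?k / p) * (c ^ ?k * PQ Q H z)"
    by (metis mult.assoc mult_1)
  also have "\<dots> \<le> S powr (?k / p) * lam p Q H"
    using \<open>c ^ ?k * PQ Q H z \<le> lam p Q H\<close> by (intro mult_left_mono) auto
  finally show ?thesis
    by (simp add: mult.commute)
qed

section \<open>Deleting a vertex of an extremal graph\<close>

lemma pnorm_one_sum_remove:
  assumes "finite V" "v \<in> V" "pnorm_one p V x" "x v \<ge> 0"
  shows "(\<Sum>i\<in>V - {v}. \<bar>x i\<bar> powr p) = 1 - x v powr p"
  using assms sum.remove[of V v "\<lambda>i. \<bar>x i\<bar> powr p"] unfolding pnorm_one_def by simp

text \<open>The Lagrange condition at a positive coordinate of a principal eigenvector: moving $x_v$
  alone keeps $P_{Q,H}$ below $\lambda$ times the $s/p$-th power of the norm, with equality at $x_v$,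
  so the derivatives in $x_v$ of both sides agree.\<close>
lemma principal_eigvec_PQ_partial:
  assumes p: "p > 1" and fin: "finite (verts H)" and v: "v \<in> verts H"
    and pe: "principal_eigvec p Q H x" and pos: "x v > 0"
  shows "PQ_partial Q H v x = card (verts Q) * lam p Q H * x v powr (p - 1)"
proof -
  let ?k = "card (verts Q)"
  define A where "A = PQ Q (induced H (verts H - {v})) x"
  define B where "B = PQ_partial Q H v x"
  define L where "L = lam p Q H"
  define c where "c = (\<Sum>i\<in>verts H - {v}. \<bar>x i\<bar> powr p)"
  define N where "N w = c + w powr p" for w
  define h where "h w = L * N w powr (?k / p) - w * B" for w
  have pn: "pnorm_one p (verts H) x" and "PQ Q H x = L"
    using pe unfolding principal_eigvec_def L_def by auto
  then have "A + x v * B = L"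
    using PQ_split[OF fin v] unfolding A_def B_def by simp
  have "c = 1 - x v powr p"
    unfolding c_def using pnorm_one_sum_remove[OF fin v pn] pos by simp
  then have N1: "N (x v) = 1"
    unfolding N_def by simp
  have "c \<ge> 0"
    unfolding c_def by (intro sum_nonneg) auto
  have h_ge: "h (x v) \<le> h w" if "w > 0" for w
  proof -
    have "(\<Sum>i\<in>verts H - {v}. \<bar>(x(v := w)) i\<bar> powr p) = c"
      unfolding c_def by (intro sum.cong) auto
    then have "(\<Sum>i\<in>verts H. \<bar>(x(v := w)) i\<bar> powr p) = N w"
      using sum.remove[OF fin v, of "\<lambda>i. \<bar>(x(v := w)) i\<bar> powr p"] that
      unfolding N_def by simp
    moreover have "N w > 0"
      unfolding N_def using \<open>c \<ge> 0\<close> that by (simp add: add_nonneg_pos)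
    ultimately have "PQ Q H (x(v := w)) \<le> L * N w powr (?k / p)"
      unfolding L_def using p fin by (intro PQ_le_lam_mult_powr) auto
    then have "A + w * B \<le> L * N w powr (?k / p)"
      using PQ_fun_upd[OF fin v] unfolding A_def B_def by simp
    then show ?thesis
      unfolding h_def using N1 \<open>A + x v * B = L\<close> by simp
  qed
  have "DERIV N (x v) :> p * x v powr (p - 1)"
    unfolding N_def using has_real_derivative_powr[OF pos] pos by (auto intro!: derivative_eq_intros)
  then have "DERIV h (x v) :> L * ((?k / p) * (p * x v powr (p - 1))) - B"
    unfolding h_def using N1 p by (auto intro!: derivative_eq_intros DERIV_fun_powr[THEN DERIV_cong])
  then have "DERIV h (x v) :> L * ?k * x v powr (p - 1) - B"
    using p by (simp add: mult.assoc)
  moreover have "\<forall>w. \<bar>x v - w\<bar> < x v \<longrightarrow> h (x v) \<le> h w"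
    using h_ge by auto
  ultimately have "L * ?k * x v powr (p - 1) - B = 0"
    using pos DERIV_local_min by blast
  then show ?thesis
    unfolding B_def L_def by (simp add: algebra_simps)
qed

lemma principal_eigvec_mult_PQ_partial:
  assumes "p > 1" "finite (verts H)" "v \<in> verts H" "principal_eigvec p Q H x"
  shows "x v * PQ_partial Q H v x = card (verts Q) * lam p Q H * x v powr p"
proof (cases "x v = 0")
  case False
  then have "x v > 0"
    using assms(3,4) unfolding principal_eigvec_def by force
  then have "x v * x v powr (p - 1) = x v powr p"
    by (simp add: powr_mult_base)
  then show ?thesis
    using principal_eigvec_PQ_partial[OF assms \<open>x v > 0\<close>] by (simp add: algebra_simps)
qed simp

lemma lam_delete_vertex:
  assumes p: "p > 1" and fin: "finite (verts H)" and v: "v \<in> verts H"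
    and pe: "principal_eigvec p Q H x" and t: "x v powr p < 1"
  shows "lam p Q H * (1 - card (verts Q) * x v powr p) * (1 - x v powr p) powr (- (card (verts Q) / p))
    \<le> lam p Q (induced H (verts H - {v}))"
proof -
  let ?k = "card (verts Q)"
  let ?H' = "induced H (verts H - {v})"
  define t where "t = x v powr p"
  have "PQ Q H x = lam p Q H" and "pnorm_one p (verts H) x" and "x v \<ge> 0"
    using pe v unfolding principal_eigvec_def by auto
  then have "lam p Q H * (1 - ?k * t) = PQ Q ?H' x"
    using PQ_split[OF fin v, of Q x] principal_eigvec_mult_PQ_partial[OF p fin v pe]
    unfolding t_def by (simp add: algebra_simps)
  also have "\<dots> \<le> lam p Q ?H' * (1 - t) powr (?k / p)"
    using pnorm_one_sum_remove[OF fin v] \<open>pnorm_one p (verts H) x\<close> \<open>x v \<ge> 0\<close> p fin t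
    unfolding t_def by (intro PQ_le_lam_mult_powr) auto
  finally have "lam p Q H * (1 - ?k * t) * (1 - t) powr (- (?k / p))
      \<le> lam p Q ?H' * ((1 - t) powr (?k / p) * (1 - t) powr (- (?k / p)))"
    by (simp add: mult_right_mono mult.assoc[symmetric])
  also have "(1 - t) powr (?k / p) * (1 - t) powr (- (?k / p)) = 1"
    using t unfolding t_def by (simp flip: powr_add)
  finally show ?thesis
    unfolding t_def by simp
qed

section \<open>Asymptotic estimates\<close>

lemma ln_removal_factor_ge:
  fixes k p t :: real
  assumes "p > 0" "k \<ge> 0" "0 \<le> t" "k * t \<le> 1 / 2" "t < 1"
  shows "- ((k - k / p) * t) - 2 * (k * t)\<^sup>2 \<le> ln ((1 - k * t) * (1 - t) powr (- (k / p)))"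
proof -
  have "- (k * t) - 2 * (k * t)\<^sup>2 \<le> ln (1 - k * t)"
    using assms by (intro ln_one_minus_pos_lower_bound) (auto intro: mult_nonneg_nonneg)
  moreover have "(k / p) * ln (1 - t) \<le> (k / p) * (- t)"
    using assms ln_le_minus_one[of "1 - t"] by (intro mult_left_mono) auto
  moreover have "ln ((1 - k * t) * (1 - t) powr (- (k / p))) = ln (1 - k * t) - (k / p) * ln (1 - t)"
    using assms by (simp add: ln_mult ln_powr)
  ultimately show ?thesis
    by (simp add: algebra_simps)
qed

text \<open>Below the threshold $\frac1m(1 - \frac{p}{(p-1)s\log m})$ the gain $\frac{1}{m\log m}$ of the
  first-order term beats the second-order error, leaving $\frac{3}{4m\log m}$.\<close>
lemma removal_factor_ge_threshold:
  fixes p m t :: real and s :: nat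
  assumes p: "p > 1" and s: "s \<ge> 1" and m: "2 * real s \<le> m" "1 < m"
    and m_large: "8 * (real s)\<^sup>2 * ln m \<le> m"
    and t: "0 \<le> t" "t < 1 / m * (1 - p / ((p - 1) * real s * ln m))"
  shows "exp ((real s / p - real s) / m + 3 / (4 * m * ln m))
    \<le> (1 - real s * t) * (1 - t) powr (- (real s / p))"
proof -
  define e where "e = real s - real s / p"
  define L where "L = ln m"
  have "L > 0" "e > 0"
    unfolding L_def e_def using m p s by (auto simp: field_simps)
  have e_L: "e * (p / ((p - 1) * real s * L)) = 1 / L"
    unfolding e_def using p s \<open>L > 0\<close> by (simp add: field_simps)
  have t': "t < 1 / m - 1 / m * (p / ((p - 1) * real s * L))"
    using t(2) unfolding L_def by (simp add: algebra_simps)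
  moreover have "0 \<le> 1 / m * (p / ((p - 1) * real s * L))"
    using p m \<open>L > 0\<close> by simp
  ultimately have "t \<le> 1 / m"
    by linarith
  then have "real s * t \<le> real s / m"
    using mult_left_mono[of t "1 / m" "real s"] by simp
  also have "\<dots> \<le> 1 / 2"
    using m by (simp add: field_simps)
  finally have st: "real s * t \<le> 1 / 2" .
  have "1 / m < 1"
    using m(2) by simp
  then have "t < 1"
    using \<open>t \<le> 1 / m\<close> by linarith
  have "e * t \<le> e * (1 / m - 1 / m * (p / ((p - 1) * real s * L)))"
    using t' \<open>e > 0\<close> by (intro mult_left_mono) auto
  also have "\<dots> = e / m - 1 / m * (e * (p / ((p - 1) * real s * L)))"
    by (simp add: algebra_simps)
  also have "\<dots> = e / m - 1 / (m * L)"
    unfolding e_L by simp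
  finally have first_order: "e * t \<le> e / m - 1 / (m * L)" .
  have "t\<^sup>2 \<le> (1 / m)\<^sup>2"
    using \<open>t \<le> 1 / m\<close> t(1) by (intro power_mono) auto
  then have "2 * (real s * t)\<^sup>2 \<le> 2 * (real s)\<^sup>2 / m\<^sup>2"
    using mult_left_mono[of "t\<^sup>2" "1 / m\<^sup>2" "2 * (real s)\<^sup>2"]
    by (simp add: power_mult_distrib power_divide)
  also have "\<dots> \<le> 1 / (4 * m * L)"
    using m_large m \<open>L > 0\<close> unfolding L_def by (simp add: field_simps power2_eq_square)
  finally have second_order: "2 * (real s * t)\<^sup>2 \<le> 1 / (4 * m * L)" .
  have "- (e * t) - 2 * (real s * t)\<^sup>2 \<le> ln ((1 - real s * t) * (1 - t) powr (- (real s / p)))"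
    unfolding e_def using p t(1) st \<open>t < 1\<close> by (intro ln_removal_factor_ge) auto
  moreover have "1 / (m * L) - 1 / (4 * m * L) = 3 / (4 * m * L)"
    by (simp add: field_simps)
  moreover have "(real s / p - real s) / m = - (e / m)"
    unfolding e_def by argo
  ultimately have "(real s / p - real s) / m + 3 / (4 * m * L)
      \<le> ln ((1 - real s * t) * (1 - t) powr (- (real s / p)))"
    using first_order second_order by linarith
  moreover have "(1 - real s * t) * (1 - t) powr (- (real s / p)) > 0"
    using st \<open>t < 1\<close> by simp
  ultimately show ?thesis
    unfolding L_def by (metis exp_le_cancel_iff exp_ln)
qed

lemma weight_le_exp_mult:
  fixes E m :: real
  assumes E: "E \<le> 0" and m: "3 \<le> m" and m_large: "2 / 3 * m * ln m \<le> (m - 1) * ln (m - 1)"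
  shows "m powr E * sqrt (ln m) \<le> exp (E / m + 3 / (4 * m * ln m)) * ((m - 1) powr E * sqrt (ln (m - 1)))"
proof -
  define L where "L = ln m"
  define L1 where "L1 = ln (m - 1)"
  have "L > 0" "L1 > 0"
    unfolding L_def L1_def using m by auto
  have "ln (m - 1) - ln m \<le> - 1 / m"
    using ln_diff_le[of "m - 1" m] m by simp
  then have power_part: "E * (ln m - ln (m - 1)) \<le> E / m"
    using mult_left_mono_neg[of "1 / m" "ln m - ln (m - 1)" E] E by simp
  have "ln L - ln L1 \<le> (L - L1) / L1"
    using ln_diff_le \<open>L > 0\<close> \<open>L1 > 0\<close> by blast
  also have "\<dots> \<le> 1 / (m - 1) / L1"
    using ln_diff_le[of m "m - 1"] m \<open>L1 > 0\<close> unfolding L_def L1_def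
    by (intro divide_right_mono) auto
  also have "\<dots> \<le> 1 / (2 / 3 * m * L)"
    unfolding divide_divide_eq_left using m_large m \<open>L > 0\<close> unfolding L_def L1_def
    by (intro divide_left_mono) auto
  finally have log_part: "(ln L - ln L1) / 2 \<le> 3 / (4 * m * L)"
    by (simp add: field_simps)
  have "ln (m powr E * sqrt L) - ln ((m - 1) powr E * sqrt L1) = E * (ln m - ln (m - 1)) + (ln L - ln L1) / 2"
    using m \<open>L > 0\<close> \<open>L1 > 0\<close> by (simp add: ln_mult ln_powr ln_sqrt field_simps)
  then have "ln (m powr E * sqrt L) \<le> E / m + 3 / (4 * m * L) + ln ((m - 1) powr E * sqrt L1)"
    using power_part log_part by linarith
  moreover have "m powr E * sqrt L > 0"
    using m \<open>L > 0\<close> by simp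
  ultimately have "m powr E * sqrt L \<le> exp (E / m + 3 / (4 * m * L) + ln ((m - 1) powr E * sqrt L1))"
    by (metis exp_le_cancel_iff exp_ln)
  then show ?thesis
    using m \<open>L1 > 0\<close> unfolding L_def L1_def by (simp add: exp_add)
qed

lemma eventually_weight_step:
  fixes p :: real and s :: nat
  assumes p: "p > 1" and s: "s \<ge> 1"
  shows "\<forall>\<^sub>F n in sequentially. \<forall>t. 0 \<le> t \<and> t < 1 / real n * (1 - p / ((p - 1) * real s * ln (real n))) \<longrightarrow>
    real n powr (real s / p - real s) * sqrt (ln (real n))
      \<le> (1 - real s * t) * (1 - t) powr (- (real s / p))
         * (real (n - 1) powr (real s / p - real s) * sqrt (ln (real (n - 1))))"
proof -
  define E where "E = real s / p - real s"
  have "E \<le> 0"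
    unfolding E_def using p mult_right_mono[of 1 p "real s"] by (simp add: field_simps)
  have "filterlim (\<lambda>n::nat. real n / ln (real n)) at_top sequentially"
    by real_asymp
  then have "\<forall>\<^sub>F n in sequentially. 8 * (real s)\<^sup>2 \<le> real n / ln (real n)"
    by (simp add: filterlim_at_top)
  moreover have "\<forall>\<^sub>F n in sequentially. 2 / 3 * real n * ln (real n) \<le> (real n - 1) * ln (real n - 1)"
    by real_asymp
  moreover have "\<forall>\<^sub>F n in sequentially. 2 * s + 3 \<le> n"
    by (rule eventually_ge_at_top)
  ultimately show ?thesis
  proof eventually_elim
    case (elim n)
    define m where "m = real n"
    have m: "3 \<le> m" "2 * real s \<le> m" "1 < m" and "real (n - 1) = m - 1"
      using elim(3) unfolding m_def by auto
    have "8 * (real s)\<^sup>2 * ln m \<le> m"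
      using elim(1) m unfolding m_def by (simp add: field_simps)
    show ?case
    proof (intro allI impI)
      fix t assume t: "0 \<le> t \<and> t < 1 / real n * (1 - p / ((p - 1) * real s * ln (real n)))"
      have "0 \<le> t" "t < 1 / m * (1 - p / ((p - 1) * real s * ln m))"
        using t unfolding m_def by auto
      then have "exp (E / m + 3 / (4 * m * ln m)) \<le> (1 - real s * t) * (1 - t) powr (- (real s / p))"
        unfolding E_def using p s m \<open>8 * (real s)\<^sup>2 * ln m \<le> m\<close> by (intro removal_factor_ge_threshold)
      moreover have "0 \<le> (m - 1) powr E * sqrt (ln (m - 1))"
        using m by simp
      ultimately have "exp (E / m + 3 / (4 * m * ln m)) * ((m - 1) powr E * sqrt (ln (m - 1)))
          \<le> (1 - real s * t) * (1 - t) powr (- (real s / p)) * ((m - 1) powr E * sqrt (ln (m - 1)))"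
        by (rule mult_right_mono)
      then have "m powr E * sqrt (ln m)
          \<le> (1 - real s * t) * (1 - t) powr (- (real s / p)) * ((m - 1) powr E * sqrt (ln (m - 1)))"
        using weight_le_exp_mult[OF \<open>E \<le> 0\<close> m(1) elim(2)[folded m_def]] by linarith
      then show "real n powr (real s / p - real s) * sqrt (ln (real n))
        \<le> (1 - real s * t) * (1 - t) powr (- (real s / p))
          * (real (n - 1) powr (real s / p - real s) * sqrt (ln (real (n - 1))))"
        unfolding E_def m_def \<open>real (n - 1) = m - 1\<close> m_def .
    qed
  qed
qed

lemma LIMSEQ_zero_if_weighted_decreasing:
  fixes a w :: "nat \<Rightarrow> real"
  assumes dec: "\<forall>\<^sub>F n in sequentially. a (Suc n) * w (Suc n) \<le> a n * w n"
    and nonneg: "\<forall>\<^sub>F n in sequentially. 0 \<le> a n"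
    and w: "filterlim w at_top sequentially"
  shows "a \<longlonglongrightarrow> 0"
proof -
  have "\<forall>\<^sub>F n in sequentially. w n > 0"
    using w filterlim_at_top_dense by blast
  with dec nonneg have "\<forall>\<^sub>F n in sequentially. a (Suc n) * w (Suc n) \<le> a n * w n \<and> 0 \<le> a n \<and> w n > 0"
    by eventually_elim simp
  then obtain N where N: "\<And>n. n \<ge> N \<Longrightarrow> a (Suc n) * w (Suc n) \<le> a n * w n \<and> 0 \<le> a n \<and> w n > 0"
    unfolding eventually_sequentially by blast
  have bound: "a n * w n \<le> a N * w N" if "n \<ge> N" for n
    using that
  proof (induction n rule: dec_induct)
    case (step n)
    then show ?case
      using N[of n] by linarith
  qed simp
  show ?thesis
  proof (rule tendsto_sandwich[of "\<lambda>_. 0" a _ "\<lambda>n. a N * w N / w n"])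
    show "\<forall>\<^sub>F n in sequentially. a n \<le> a N * w N / w n"
      unfolding eventually_sequentially
    proof (intro exI allI impI)
      fix n assume "N \<le> n"
      then show "a n \<le> a N * w N / w n"
        using bound N by (simp add: pos_le_divide_eq)
    qed
    show "(\<lambda>n. a N * w N / w n) \<longlonglongrightarrow> 0"
      using w by (intro tendsto_divide_0[OF tendsto_const] filterlim_at_top_imp_at_infinity)
  qed (use nonneg in auto)
qed

section \<open>Minimum entries of principal eigenvectors\<close>

lemma lamPn_mult_removal_factor_le:
  fixes t :: real
  assumes p: "p > 1" and her: "hereditary r \<P>" and H: "H \<in> \<P>" "card (verts H) = n" "n \<ge> 2"
    and lam: "lam p Q H = lamPn p Q \<P> n" and pe: "principal_eigvec p Q H x"
    and t: "t = xmin (verts H) x powr p" "t < 1"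
  shows "lamPn p Q \<P> n * (1 - card (verts Q) * t) * (1 - t) powr (- (card (verts Q) / p))
    \<le> lamPn p Q \<P> (n - 1)"
proof -
  have fin: "finite (verts H)" and "verts H \<noteq> {}"
    using H card_ge_0_finite by force+
  then obtain v where v: "v \<in> verts H" "x v = xmin (verts H) x"
    unfolding xmin_def by (metis (mono_tags, lifting) Min_in finite_imageI image_iff image_is_empty)
  have "induced H (verts H - {v}) \<in> \<P>"
    using her H unfolding hereditary_def by blast
  moreover have "card (verts (induced H (verts H - {v}))) = n - 1"
    using H fin v by simp
  ultimately have "lam p Q (induced H (verts H - {v})) \<le> lamPn p Q \<P> (n - 1)"
    using p H by (intro lam_le_lamPn) auto
  then show ?thesis
    using lam_delete_vertex[OF p fin v(1) pe] t lam v(2) by simp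
qed

lemma principal_eigvec_lam_nonneg: "principal_eigvec p Q H x \<Longrightarrow> 0 \<le> lam p Q H"
  unfolding principal_eigvec_def using PQ_nonneg by metis

lemma eventually_weighted_lamPn_decreasing:
  assumes p: "p > 1" and s: "card (verts Q) = s" "s \<ge> 1" and her: "hereditary r \<P>"
    and ev: "\<forall>\<^sub>F n in sequentially. H n \<in> \<P> \<and> card (verts (H n)) = n \<and> lam p Q (H n) = lamPn p Q \<P> n
      \<and> principal_eigvec p Q (H n) (x n)
      \<and> xmin (verts (H n)) (x n) powr p < 1 / real n * (1 - p / ((p - 1) * real s * ln (real n)))"
  shows "\<forall>\<^sub>F n in sequentially. lamPn p Q \<P> (Suc n) * real (Suc n) powr (real s / p - real s) * sqrt (ln (real (Suc n)))
    \<le> lamPn p Q \<P> n * real n powr (real s / p - real s) * sqrt (ln (real n))"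
proof -
  define W where "W n = real n powr (real s / p - real s) * sqrt (ln (real n))" for n
  have "\<forall>\<^sub>F n in sequentially. lamPn p Q \<P> n * W n \<le> lamPn p Q \<P> (n - 1) * W (n - 1)"
    using ev eventually_weight_step[OF p s(2)] eventually_ge_at_top[of 2]
  proof eventually_elim
    case (elim n)
    define t where "t = xmin (verts (H n)) (x n) powr p"
    have Hn: "H n \<in> \<P>" "card (verts (H n)) = n" "lam p Q (H n) = lamPn p Q \<P> n"
      and pe: "principal_eigvec p Q (H n) (x n)"
      and t: "t < 1 / real n * (1 - p / ((p - 1) * real s * ln (real n)))"
      using elim(1) unfolding t_def by auto
    have "0 \<le> p / ((p - 1) * real s * ln (real n))"
      using p elim(3) s by simp
    then have "1 / real n * (1 - p / ((p - 1) * real s * ln (real n))) \<le> 1 / real n * 1"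
      by (intro mult_left_mono) auto
    moreover have "1 / real n \<le> 1"
      using elim(3) by simp
    ultimately have "t < 1"
      using t by linarith
    have removal: "lamPn p Q \<P> n * ((1 - s * t) * (1 - t) powr (- (s / p))) \<le> lamPn p Q \<P> (n - 1)"
      using lamPn_mult_removal_factor_le[OF p her Hn(1,2) elim(3) Hn(3) pe t_def \<open>t < 1\<close>] s(1)
      by (simp add: mult.assoc)
    have "0 \<le> lamPn p Q \<P> n"
      using Hn(3) principal_eigvec_lam_nonneg[OF pe] by simp
    have "0 \<le> W (n - 1)"
      unfolding W_def using elim(3) by auto
    have "W n \<le> (1 - s * t) * (1 - t) powr (- (s / p)) * W (n - 1)"
      using elim(2) t unfolding W_def t_def by auto
    then have "lamPn p Q \<P> n * W n \<le> lamPn p Q \<P> n * ((1 - s * t) * (1 - t) powr (- (s / p)) * W (n - 1))"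
      using \<open>0 \<le> lamPn p Q \<P> n\<close> by (rule mult_left_mono)
    also have "\<dots> = lamPn p Q \<P> n * ((1 - s * t) * (1 - t) powr (- (s / p))) * W (n - 1)"
      by (simp only: mult.assoc)
    also have "\<dots> \<le> lamPn p Q \<P> (n - 1) * W (n - 1)"
      using removal \<open>0 \<le> W (n - 1)\<close> by (rule mult_right_mono)
    finally show ?case .
  qed
  then show ?thesis
    using eventually_sequentially_Suc[of "\<lambda>n. lamPn p Q \<P> n * W n \<le> lamPn p Q \<P> (n - 1) * W (n - 1)"]
    unfolding W_def by (simp add: mult.assoc)
qed

lemma lamP_eq_0_if_eventually_small_xmin:
  assumes p: "p > 1" and s: "card (verts Q) = s" "s \<ge> 1" and her: "hereditary r \<P>"
    and ev: "\<forall>\<^sub>F n in sequentially. H n \<in> \<P> \<and> card (verts (H n)) = n \<and> lam p Q (H n) = lamPn p Q \<P> n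
      \<and> principal_eigvec p Q (H n) (x n)
      \<and> xmin (verts (H n)) (x n) powr p < 1 / real n * (1 - p / ((p - 1) * real s * ln (real n)))"
  shows "lamP p Q \<P> = 0"
proof -
  define a where "a n = lamPn p Q \<P> n * real n powr (real s / p - real s)" for n
  have "\<forall>\<^sub>F n in sequentially. a (Suc n) * sqrt (ln (real (Suc n))) \<le> a n * sqrt (ln (real n))"
    using eventually_weighted_lamPn_decreasing[OF assms] unfolding a_def .
  moreover have "\<forall>\<^sub>F n in sequentially. 0 \<le> a n"
    using ev unfolding a_def
    by eventually_elim (metis principal_eigvec_lam_nonneg powr_ge_zero zero_le_mult_iff)
  moreover have "filterlim (\<lambda>n. sqrt (ln (real n))) at_top sequentially"
    by real_asymp
  ultimately have "a \<longlonglongrightarrow> 0"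
    by (rule LIMSEQ_zero_if_weighted_decreasing)
  then show ?thesis
    unfolding lamP_def s(1) a_def by (rule limI)
qed

theorem lemma3p5:
  fixes p :: real and r s :: nat and Q :: hgraph and \<P> :: "hgraph set"
    and H :: "nat \<Rightarrow> hgraph" and x :: "nat \<Rightarrow> nat \<Rightarrow> real"
  assumes "p > 1" and "2 \<le> r" and "r \<le> s"
    and "rgraph r Q" and "card (verts Q) = s"
    and "hereditary r \<P>"
    and "lamP p Q \<P> > 0"
    and "\<And>n. n \<ge> s \<Longrightarrow> H n \<in> \<P> \<and> card (verts (H n)) = n \<and> lam p Q (H n) = lamPn p Q \<P> n"
    and "\<And>n. n \<ge> s \<Longrightarrow> principal_eigvec p Q (H n) (x n)"
  shows "infinite {n. n \<ge> s \<and>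
           xmin (verts (H n)) (x n) powr p \<ge> (1 / real n) * (1 - p / ((p - 1) * real s * ln (real n)))}"
    (is "infinite ?S")
proof
  assume "finite ?S"
  then have "\<forall>\<^sub>F n in sequentially. n \<notin> ?S"
    by (simp add: cofinite_eq_sequentially[symmetric] eventually_cofinite)
  then have "\<forall>\<^sub>F n in sequentially. H n \<in> \<P> \<and> card (verts (H n)) = n \<and> lam p Q (H n) = lamPn p Q \<P> n
      \<and> principal_eigvec p Q (H n) (x n)
      \<and> xmin (verts (H n)) (x n) powr p < 1 / real n * (1 - p / ((p - 1) * real s * ln (real n)))"
    using eventually_ge_at_top[of s] by eventually_elim (use assms(8,9) in auto)
  then have "lamP p Q \<P> = 0"
    using assms(1-3,5,6) by (intro lamP_eq_0_if_eventually_small_xmin) auto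
  with assms(7) show False
    by simp
qed

end
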